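(* Let $\delta$ be a deco polyomino of height $n$ which is a parallelogram polyomino, and let $\pi=\Phi_4^{-1}(\delta)\in S_n$. Then the number of cells in the first (leftmost) column of $\delta$ equals the length of the last ascending run of $\pi$.
   Context: Cells are unit squares $[i,i+1]\times[j,j+1]$ with integer $i,j$; a polyomino is a finite edge-connected set of cells, up to translation. A directed polyomino has a distinguished cell (the source) such that every cell can be reached from the source by a path of cells moving only North or East inside the polyomino. It is column-convex if each column is connected. The (directed) height is the number of distinct diagonal lines $x+y=\text{const}$ passing through centers of its cells. A deco polyomino is a directed column-convex polyomino whose height is attained only in its last (rightmost) column. Every deco polyomino of height $n$ is built uniquely by $n$ steps from the empty polyomino; at step $j$ one performs either an elevation (add a cell at the bottom of the leftmost column; step 1 is always an elevation) or a column pasting (add a new column of $k$ cells, $1\le k\le j-1$, to the left of the current polyomino so that the bottoms of the first two columns lie at the same level). The bijection $\Phi_4^{-1}$ from deco polyominoes of height $n$ to $S_n$ is defined recursively: the height-1 polyomino maps to the permutation $1$; if $\delta\in D_n$ arises from $\delta'\in D_{n-1}$ and $\Phi_4^{-1}(\delta')=\pi_1\cdots\pi_{n-1}$, then $\Phi_4^{-1}(\delta)=\pi_1\cdots\pi_{n-1}\,n$ if the last step is an elevation, and $\Phi_4^{-1}(\delta)=\pi_1\cdots\pi_{n-1-k}\,n\,\pi_{n-k}\cdots\pi_{n-1}$ if the last step pastes a column of length $k$ (so that exactly $k$ entries follow $n$). An ascending run of a permutation is a maximal increasing block of consecutive entries. A parallelogram polyomino is a polyomino bounded by two lattice paths with steps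 $(1,0)$ and $(0,1)$ which intersect only at their common origin and common endpoint. *)

theory Defs
  imports Main
begin

(* Cells are identified by their lower-left corner (i,j) :: int \<times> int. *)
type_synonym cell = "int \<times> int"

datatype deco_step = Elev | Paste nat

(* Valid construction sequence: step j (1-indexed, list index j-1) is either an
   elevation or pastes a column of k cells with 1 \<le> k \<le> j-1; step 1 is an elevation. *)
definition valid_steps :: "deco_step list \<Rightarrow> bool" where
  "valid_steps s \<longleftrightarrow> s \<noteq> [] \<and> hd s = Elev \<and>
     (\<forall>j < length s. \<forall>k. s ! j = Paste k \<longrightarrow> 1 \<le> k \<and> k \<le> j)"

(* Geometric construction, processing the REVERSED step list (last step first).
   Normalisation: the leftmost column is at x = 0 and its bottom cell at y = 0. *)
fun build_rev :: "deco_step list \<Rightarrow> cell set" where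
  "build_rev [] = {}"
| "build_rev (Elev # rs) =
     insert (0, 0) ((\<lambda>(x, y). (x, y + 1)) ` build_rev rs)"
| "build_rev (Paste k # rs) =
     {(0, int y) | y. y < k} \<union> ((\<lambda>(x, y). (x + 1, y)) ` build_rev rs)"

definition deco_poly :: "deco_step list \<Rightarrow> cell set" where
  "deco_poly s = build_rev (rev s)"

fun phi_rev :: "deco_step list \<Rightarrow> nat list" where
  "phi_rev [] = []"
| "phi_rev (Elev # rs) = phi_rev rs @ [Suc (length rs)]"
| "phi_rev (Paste k # rs) =
     (let p = phi_rev rs; m = length rs
      in take (m - k) p @ [Suc m] @ drop (m - k) p)"

definition Phi4_inv :: "deco_step list \<Rightarrow> nat list" where
  "Phi4_inv s = phi_rev (rev s)"

(* Parallelogram polyomino, described column by column: the region between two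
   N/E lattice paths meeting only at their endpoints consists of w \<ge> 1 consecutive
   columns, column i being the cells with b i \<le> y \<le> t i, where the bottoms b and
   tops t are weakly increasing and consecutive columns share an edge
   (b (i+1) \<le> t i), which is exactly the condition that the two paths do not meet
   except at the endpoints. *)
definition parallelogram_polyomino :: "cell set \<Rightarrow> bool" where
  "parallelogram_polyomino P \<longleftrightarrow>
     (\<exists>(x0::int) (w::nat) (b::nat \<Rightarrow> int) (t::nat \<Rightarrow> int).
        1 \<le> w \<and>
        P = {(x0 + int i, y) | i y. i < w \<and> b i \<le> y \<and> y \<le> t i} \<and>
        (\<forall>i < w. b i \<le> t i) \<and>
        (\<forall>i. i + 1 < w \<longrightarrow> b i \<le> b (i + 1) \<and> t i \<le> t (i + 1) \<and> b (i + 1) \<le> t i))"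

definition first_column_size :: "cell set \<Rightarrow> nat" where
  "first_column_size P = card {c \<in> P. fst c = Min (fst ` P)}"

definition last_ascending_run_length :: "nat list \<Rightarrow> nat" where
  "last_ascending_run_length xs =
     (GREATEST k. k \<le> length xs \<and> sorted_wrt (<) (drop (length xs - k) xs))"

end

theory Submission
  imports Defs
begin

text \<open>
  In a parallelogram polyomino the tops of consecutive columns weakly increase, so in the
  construction of a parallelogram deco polyomino a pasted column of length \<open>k\<close> is never
  taller than the column it is pasted against.  Along the construction the first column and
  the last ascending run then evolve identically: an elevation lengthens the first column by
  one and appends the new maximum \<open>n\<close>, lengthening the last run by one; pasting a column of
  length \<open>k\<close>, which is at most the current last run, inserts \<open>n\<close> in front of the last \<open>k\<close>
  entries, and these \<open>k\<close> entries become the new last run.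
\<close>

fun first_column_height :: "deco_step list \<Rightarrow> nat" where
  "first_column_height [] = 0"
| "first_column_height (Elev # rs) = Suc (first_column_height rs)"
| "first_column_height (Paste k # rs) = k"

fun valid_rev_steps :: "deco_step list \<Rightarrow> bool" where
  "valid_rev_steps [] = True"
| "valid_rev_steps (Elev # rs) = valid_rev_steps rs"
| "valid_rev_steps (Paste k # rs) = (1 \<le> k \<and> k \<le> length rs \<and> valid_rev_steps rs)"

fun pastes_within_first_column :: "deco_step list \<Rightarrow> bool" where
  "pastes_within_first_column [] = True"
| "pastes_within_first_column (Elev # rs) = pastes_within_first_column rs"
| "pastes_within_first_column (Paste k # rs) =
     (k \<le> first_column_height rs \<and> pastes_within_first_column rs)"

text \<open>For polyominoes with connected columns this says that column tops weakly increase.\<close>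
definition tops_weakly_increasing :: "cell set \<Rightarrow> bool" where
  "tops_weakly_increasing P \<longleftrightarrow>
     (\<forall>x y z. (x, y) \<in> P \<longrightarrow> (x + 1, z) \<in> P \<longrightarrow> (\<exists>y'\<ge>y. (x + 1, y') \<in> P))"

lemma valid_steps_imp_valid_rev_steps:
  "(\<forall>j < length s. \<forall>k. s ! j = Paste k \<longrightarrow> 1 \<le> k \<and> k \<le> j) \<Longrightarrow> valid_rev_steps (rev s)"
proof (induction s rule: rev_induct)
  case (snoc x xs)
  have "\<forall>j < length xs. \<forall>k. xs ! j = Paste k \<longrightarrow> 1 \<le> k \<and> k \<le> j"
    using snoc.prems by (metis length_append_singleton less_SucI nth_append)
  moreover have "\<forall>k. x = Paste k \<longrightarrow> 1 \<le> k \<and> k \<le> length xs"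
    using snoc.prems by (metis length_append_singleton lessI nth_append_length)
  ultimately show ?case using snoc.IH by (cases x) auto
qed simp

lemma first_column_height_pos: "valid_rev_steps r \<Longrightarrow> r \<noteq> [] \<Longrightarrow> 0 < first_column_height r"
  by (cases r rule: first_column_height.cases) auto

lemma mem_shift_up_iff [simp]:
  "((a::int), (b::int)) \<in> (\<lambda>(x, y). (x, y + 1)) ` S \<longleftrightarrow> (a, b - 1) \<in> S"
  by (auto simp: image_iff) (metis case_prod_conv diff_add_cancel)

lemma mem_shift_right_iff [simp]:
  "((a::int), (b::int)) \<in> (\<lambda>(x, y). (x + 1, y)) ` S \<longleftrightarrow> (a - 1, b) \<in> S"
  by (auto simp: image_iff) (metis case_prod_conv diff_add_cancel)

lemma mem_build_rev_Elev:
  "(a, b) \<in> build_rev (Elev # rs) \<longleftrightarrow> (a, b) = (0, 0) \<or> (a, b - 1) \<in> build_rev rs"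
  by simp

lemma mem_build_rev_Paste:
  "(a, b) \<in> build_rev (Paste k # rs) \<longleftrightarrow> (a = 0 \<and> 0 \<le> b \<and> b < int k) \<or> (a - 1, b) \<in> build_rev rs"
  by simp (metis nat_less_iff of_nat_less_iff of_nat_0_le_iff int_nat_eq)

declare build_rev.simps(2,3) [simp del]

lemma build_rev_nonneg: "(x, y) \<in> build_rev r \<Longrightarrow> 0 \<le> x \<and> 0 \<le> y"
  by (induction r arbitrary: x y rule: build_rev.induct)
    (fastforce simp: mem_build_rev_Elev mem_build_rev_Paste)+

lemma mem_build_rev_first_column:
  "(0, y) \<in> build_rev r \<longleftrightarrow> 0 \<le> y \<and> y < int (first_column_height r)"
proof (induction r arbitrary: y rule: build_rev.induct)
  case (2 rs)
  show ?case unfolding mem_build_rev_Elev 2 by auto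
next
  case (3 k rs)
  have "(-1, y) \<notin> build_rev rs" using build_rev_nonneg by fastforce
  then show ?case unfolding mem_build_rev_Paste by simp
qed simp

lemma finite_build_rev: "finite (build_rev r)"
proof (induction r rule: build_rev.induct)
  case (3 k rs)
  have "{(0::int, int y) | y. y < k} = (\<lambda>y. (0, int y)) ` {..<k}" by auto
  then show ?case using 3 by (simp add: build_rev.simps)
qed (simp_all add: build_rev.simps)

lemma first_column_size_build_rev:
  assumes "0 < first_column_height r"
  shows "first_column_size (build_rev r) = first_column_height r"
proof -
  let ?P = "build_rev r"
  have "(0, 0) \<in> ?P" using assms mem_build_rev_first_column by simp
  then have "Min (fst ` ?P) = 0"
    using finite_build_rev build_rev_nonneg by (intro Min_eqI) force+
  moreover have "{c \<in> ?P. fst c = 0} = (\<lambda>y. (0::int, int y)) ` {..<first_column_height r}"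
  proof (intro set_eqI iffI)
    fix c assume "c \<in> {c \<in> ?P. fst c = 0}"
    then obtain y where "c = (0, y)" "(0, y) \<in> ?P" by (cases c) auto
    then show "c \<in> (\<lambda>y. (0, int y)) ` {..<first_column_height r}"
      using mem_build_rev_first_column by (auto intro!: image_eqI[of _ _ "nat y"])
  qed (use mem_build_rev_first_column in auto)
  ultimately show ?thesis
    unfolding first_column_size_def by (simp add: card_image inj_on_def)
qed

lemma parallelogram_polyomino_tops_weakly_increasing:
  assumes "parallelogram_polyomino P"
  shows "tops_weakly_increasing P"
  unfolding tops_weakly_increasing_def
proof (intro allI impI)
  obtain x0 w b t where
    P: "P = {(x0 + int i, y) | i y. i < w \<and> b i \<le> y \<and> y \<le> t i}"
    and bt: "\<forall>i < w. b i \<le> t i"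
    and mono: "\<forall>i. i + 1 < w \<longrightarrow> b i \<le> b (i + 1) \<and> t i \<le> t (i + 1) \<and> b (i + 1) \<le> t i"
    using assms unfolding parallelogram_polyomino_def by blast
  fix x y z assume "(x, y) \<in> P" "(x + 1, z) \<in> P"
  then obtain i i' where i: "x = x0 + int i" "i < w" "y \<le> t i"
    and i': "x + 1 = x0 + int i'" "i' < w"
    using P by auto
  then have "i' = i + 1" by linarith
  then have "(x + 1, t (i + 1)) \<in> P" "y \<le> t (i + 1)"
    using P bt mono i i' by force+
  then show "\<exists>y'\<ge>y. (x + 1, y') \<in> P" by blast
qed

lemma tops_weakly_increasing_translate:
  assumes "tops_weakly_increasing (f ` S)" and "\<And>x y. f (x, y) = (x + a, y + b)"
  shows "tops_weakly_increasing S"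
  unfolding tops_weakly_increasing_def
proof (intro allI impI)
  fix x y z assume "(x, y) \<in> S" "(x + 1, z) \<in> S"
  then have "(x + a, y + b) \<in> f ` S" "(x + a + 1, z + b) \<in> f ` S"
    using assms(2) by (metis image_eqI, metis add.commute add.left_commute image_eqI)
  then obtain y' where "y + b \<le> y'" "(x + a + 1, y') \<in> f ` S"
    using assms(1) unfolding tops_weakly_increasing_def by blast
  moreover from this(2) have "(x + 1, y' - b) \<in> S"
    using assms(2) by auto
  ultimately show "\<exists>y'\<ge>y. (x + 1, y') \<in> S" by (intro exI[of _ "y' - b"]) auto
qed

lemma tops_weakly_increasing_Un_drop:
  assumes "tops_weakly_increasing (A \<union> T)" and "\<And>x y z. (x, y) \<in> A \<Longrightarrow> (x - 1, z) \<notin> T"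
  shows "tops_weakly_increasing T"
  unfolding tops_weakly_increasing_def
proof (intro allI impI)
  fix x y z assume "(x, y) \<in> T" "(x + 1, z) \<in> T"
  then obtain y' where "y \<le> y'" "(x + 1, y') \<in> A \<union> T"
    using assms(1) unfolding tops_weakly_increasing_def by blast
  moreover have "(x + 1, y') \<notin> A" using assms(2) \<open>(x, y) \<in> T\<close> by fastforce
  ultimately show "\<exists>y'\<ge>y. (x + 1, y') \<in> T" by blast
qed

lemma tops_weakly_increasing_build_rev_tl:
  assumes "tops_weakly_increasing (build_rev (st # rs))"
  shows "tops_weakly_increasing (build_rev rs)"
proof (cases st)
  case Elev
  have "tops_weakly_increasing ({(0, 0)} \<union> (\<lambda>(x, y). (x, y + 1)) ` build_rev rs)"
    using assms unfolding Elev build_rev.simps by simp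
  then have "tops_weakly_increasing ((\<lambda>(x, y). (x, y + 1)) ` build_rev rs)"
    by (rule tops_weakly_increasing_Un_drop) (use build_rev_nonneg in fastforce)
  then show ?thesis by (rule tops_weakly_increasing_translate[of _ _ 0 1]) simp
next
  case (Paste k)
  have "tops_weakly_increasing ({(0, int y) | y. y < k} \<union> (\<lambda>(x, y). (x + 1, y)) ` build_rev rs)"
    using assms unfolding Paste build_rev.simps .
  then have "tops_weakly_increasing ((\<lambda>(x, y). (x + 1, y)) ` build_rev rs)"
    by (rule tops_weakly_increasing_Un_drop) (use build_rev_nonneg in fastforce)
  then show ?thesis by (rule tops_weakly_increasing_translate[of _ _ 1 0]) simp
qed

lemma tops_weakly_increasing_Paste_le:
  assumes "valid_rev_steps (Paste k # rs)" and "tops_weakly_increasing (build_rev (Paste k # rs))"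
  shows "k \<le> first_column_height rs"
proof -
  have k: "1 \<le> k" "k \<le> length rs" and rs: "valid_rev_steps rs" using assms(1) by auto
  then have "(0, 0) \<in> build_rev rs"
    using first_column_height_pos mem_build_rev_first_column by fastforce
  then have "(0 + 1, 0) \<in> build_rev (Paste k # rs)"
    and "(0, int (k - 1)) \<in> build_rev (Paste k # rs)"
    using k by (simp_all add: mem_build_rev_Paste)
  then obtain y' where "int (k - 1) \<le> y'" "(0 + 1, y') \<in> build_rev (Paste k # rs)"
    using assms(2) unfolding tops_weakly_increasing_def by blast
  moreover from this(2) have "y' < int (first_column_height rs)"
    using mem_build_rev_first_column by (simp add: mem_build_rev_Paste)
  ultimately show ?thesis using k by linarith
qed

lemma tops_weakly_increasing_pastes_within_first_column:
  "valid_rev_steps r \<Longrightarrow> tops_weakly_increasing (build_rev r) \<Longrightarrow> pastes_within_first_column r"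
proof (induction r)
  case (Cons st rs)
  then have "pastes_within_first_column rs"
    by (cases st) (auto dest: tops_weakly_increasing_build_rev_tl)
  then show ?case using Cons.prems tops_weakly_increasing_Paste_le by (cases st) auto
qed simp

lemma last_ascending_run_length_le_and_sorted:
  "last_ascending_run_length xs \<le> length xs \<and>
   sorted_wrt (<) (drop (length xs - last_ascending_run_length xs) xs)"
  unfolding last_ascending_run_length_def
  by (rule GreatestI_nat[where k = 0 and b = "length xs"]) auto

lemma last_ascending_run_length_maximal:
  "j \<le> length xs \<Longrightarrow> sorted_wrt (<) (drop (length xs - j) xs) \<Longrightarrow>
   j \<le> last_ascending_run_length xs"
  unfolding last_ascending_run_length_def
  by (rule Greatest_le_nat[where b = "length xs"]) auto

lemma sorted_wrt_drop_last_ascending_run: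
  assumes "j \<le> last_ascending_run_length xs"
  shows "sorted_wrt (<) (drop (length xs - j) xs)"
proof -
  let ?r = "last_ascending_run_length xs"
  have "drop (length xs - j) xs = drop (?r - j) (drop (length xs - ?r) xs)"
    using assms last_ascending_run_length_le_and_sorted[of xs] by simp
  then show ?thesis using last_ascending_run_length_le_and_sorted[of xs] sorted_wrt_drop by metis
qed

lemma last_ascending_run_length_eqI:
  assumes "k \<le> length xs" "sorted_wrt (<) (drop (length xs - k) xs)"
    and "\<And>j. k < j \<Longrightarrow> j \<le> length xs \<Longrightarrow> \<not> sorted_wrt (<) (drop (length xs - j) xs)"
  shows "last_ascending_run_length xs = k"
  by (metis assms last_ascending_run_length_maximal last_ascending_run_length_le_and_sorted
      le_antisym not_le)

lemma last_ascending_run_length_append_greater: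
  assumes "\<forall>u\<in>set xs. u < v"
  shows "last_ascending_run_length (xs @ [v]) = Suc (last_ascending_run_length xs)"
proof (rule last_ascending_run_length_eqI)
  let ?r = "last_ascending_run_length xs"
  have le: "?r \<le> length xs" and sorted: "sorted_wrt (<) (drop (length xs - ?r) xs)"
    using last_ascending_run_length_le_and_sorted by auto
  then show "Suc ?r \<le> length (xs @ [v])" by simp
  have "drop (length (xs @ [v]) - Suc ?r) (xs @ [v]) = drop (length xs - ?r) xs @ [v]"
    using le by simp
  then show "sorted_wrt (<) (drop (length (xs @ [v]) - Suc ?r) (xs @ [v]))"
    using sorted assms by (auto simp: sorted_wrt_append dest: in_set_dropD)
next
  fix j assume j: "Suc (last_ascending_run_length xs) < j" "j \<le> length (xs @ [v])"
  have "\<not> sorted_wrt (<) (drop (length xs - (j - 1)) xs)"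
  proof
    assume "sorted_wrt (<) (drop (length xs - (j - 1)) xs)"
    then have "j - 1 \<le> last_ascending_run_length xs"
      using j by (intro last_ascending_run_length_maximal) auto
    then show False using j by linarith
  qed
  moreover have "drop (length (xs @ [v]) - j) (xs @ [v]) = drop (length xs - (j - 1)) xs @ [v]"
    using j by simp
  ultimately show "\<not> sorted_wrt (<) (drop (length (xs @ [v]) - j) (xs @ [v]))"
    by (simp add: sorted_wrt_append)
qed

lemma last_ascending_run_length_insert_greater:
  assumes k: "1 \<le> k" "k \<le> last_ascending_run_length p" and greater: "\<forall>u\<in>set p. u < v"
  shows "last_ascending_run_length (take (length p - k) p @ [v] @ drop (length p - k) p) = k"
proof (rule last_ascending_run_length_eqI)
  let ?ys = "take (length p - k) p @ [v] @ drop (length p - k) p"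
  have "k \<le> length p" using k last_ascending_run_length_le_and_sorted[of p] by simp
  then have len: "length ?ys = Suc (length p)" by simp
  show "k \<le> length ?ys" using len \<open>k \<le> length p\<close> by simp
  have "drop (length ?ys - k) ?ys = drop (length p - k) p"
    using \<open>k \<le> length p\<close> len by (simp add: Suc_diff_le)
  then show "sorted_wrt (<) (drop (length ?ys - k) ?ys)"
    using sorted_wrt_drop_last_ascending_run[OF k(2)] by simp
  fix j assume j: "k < j" "j \<le> length ?ys"
  have "drop (length p - k) p \<noteq> []" using k \<open>k \<le> length p\<close> by simp
  then have "hd (drop (length p - k) p) \<in> set (drop (length p - k) p)" by (rule hd_in_set)
  moreover from this have "hd (drop (length p - k) p) < v" using greater by (auto dest: in_set_dropD)
  ultimately have "\<not> sorted_wrt (<) ([v] @ drop (length p - k) p)"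
    by (fastforce simp: sorted_wrt_append)
  moreover have "drop (length ?ys - j) ?ys
      = drop (length p - (j - 1)) (take (length p - k) p) @ [v] @ drop (length p - k) p"
    using j \<open>k \<le> length p\<close> by (simp add: Suc_diff_le)
  ultimately show "\<not> sorted_wrt (<) (drop (length ?ys - j) ?ys)"
    by (metis sorted_wrt_append)
qed

lemma length_phi_rev: "length (phi_rev r) = length r"
  by (induction r rule: phi_rev.induct) (auto simp: Let_def)

lemma phi_rev_le_length: "v \<in> set (phi_rev r) \<Longrightarrow> v \<le> length r"
  by (induction r arbitrary: v rule: phi_rev.induct)
    (force simp: Let_def dest: in_set_takeD in_set_dropD)+

lemma last_ascending_run_length_phi_rev:
  "valid_rev_steps r \<Longrightarrow> pastes_within_first_column r \<Longrightarrow>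
   last_ascending_run_length (phi_rev r) = first_column_height r"
proof (induction r rule: phi_rev.induct)
  case 1
  then show ?case using last_ascending_run_length_le_and_sorted[of "[]"] by simp
next
  case (2 rs)
  have "\<forall>u\<in>set (phi_rev rs). u < Suc (length rs)" using phi_rev_le_length by fastforce
  then show ?case using 2 last_ascending_run_length_append_greater by simp
next
  case (3 k rs)
  have "\<forall>u\<in>set (phi_rev rs). u < Suc (length rs)" using phi_rev_le_length by fastforce
  moreover have "last_ascending_run_length (phi_rev rs) = first_column_height rs"
    using 3 by simp
  ultimately show ?case
    using 3(2,3) last_ascending_run_length_insert_greater[of k "phi_rev rs" "Suc (length rs)"]
    by (simp add: Let_def length_phi_rev)
qed

theorem mainTheorem2:
  fixes s :: "deco_step list"
  assumes "valid_steps s"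
    and "parallelogram_polyomino (deco_poly s)"
  shows "first_column_size (deco_poly s) = last_ascending_run_length (Phi4_inv s)"
proof -
  have valid: "valid_rev_steps (rev s)" and "rev s \<noteq> []"
    using assms(1) valid_steps_imp_valid_rev_steps unfolding valid_steps_def by auto
  then have "first_column_size (deco_poly s) = first_column_height (rev s)"
    unfolding deco_poly_def by (intro first_column_size_build_rev first_column_height_pos)
  moreover have "pastes_within_first_column (rev s)"
    using assms(2) valid parallelogram_polyomino_tops_weakly_increasing
      tops_weakly_increasing_pastes_within_first_column
    unfolding deco_poly_def by blast
  ultimately show ?thesis
    using valid last_ascending_run_length_phi_rev unfolding Phi4_inv_def by simp
qed

end
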